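(* Let $g=\begin{pmatrix}a&b\\c&d\end{pmatrix}\in\mathrm{SL}_2(\mathbb R)\setminus S$. Then $$v(g):=\log\big(|ad|^{1/2}+|bc|^{1/2}\big)=\tfrac12\,d_{\mathbb H}\big(g\,(i\mathbb R_+),\ i\mathbb R_+\big)>0.$$
   Context: $s=\{g\in\mathrm{SL}_2(\mathbb R): abcd=0\}$ (equivalently, $g$ maps some point of $\{0,i\infty\}$ to some point of $\{0,i\infty\}$), and $S=s\cup\{g\in\mathrm{SL}_2(\mathbb R): g(iy_1)=iy_2\text{ for some }y_1,y_2>0\}$. $i\mathbb R_+$ is the imaginary axis (geodesic from $0$ to $i\infty$) in the upper half-plane, and $d_{\mathbb H}(A,B)=\inf_{z\in A,w\in B}d_{\mathbb H}(z,w)$ is the hyperbolic distance between sets. *)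

theory Defs
  imports "HOL-Analysis.Analysis"
begin

text \<open>Elements of SL_2(R) are represented by their four entries (a b; c d) with ad - bc = 1.\<close>
definition sl2 :: "real \<Rightarrow> real \<Rightarrow> real \<Rightarrow> real \<Rightarrow> bool" where
  "sl2 a b c d \<longleftrightarrow> a * d - b * c = 1"

definition mobius :: "real \<Rightarrow> real \<Rightarrow> real \<Rightarrow> real \<Rightarrow> complex \<Rightarrow> complex" where
  "mobius a b c d z = (of_real a * z + of_real b) / (of_real c * z + of_real d)"

definition hdist :: "complex \<Rightarrow> complex \<Rightarrow> real" where
  "hdist z w = arcosh (1 + (cmod (z - w))\<^sup>2 / (2 * Im z * Im w))"

definition hdist_set :: "complex set \<Rightarrow> complex set \<Rightarrow> real" where
  "hdist_set A B = Inf {hdist z w | z w. z \<in> A \<and> w \<in> B}"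

definition imag_axis :: "complex set" where
  "imag_axis = {\<i> * of_real y | y. y > 0}"

definition in_s :: "real \<Rightarrow> real \<Rightarrow> real \<Rightarrow> real \<Rightarrow> bool" where
  "in_s a b c d \<longleftrightarrow> a * b * c * d = 0"

definition in_S :: "real \<Rightarrow> real \<Rightarrow> real \<Rightarrow> real \<Rightarrow> bool" where
  "in_S a b c d \<longleftrightarrow> in_s a b c d \<or>
     (\<exists>y1 y2. y1 > 0 \<and> y2 > 0 \<and> mobius a b c d (\<i> * of_real y1) = \<i> * of_real y2)"

end

theory Submission
  imports Defs
begin

text \<open>
  For Im z > 0 the formula for hyperbolic distance gives
  cosh d(z, i t) = (|z|^2 + t^2) / (2 Im z t) \<ge> |z| / Im z, with equality at t = |z|.
  For z = g(i y) one computes (|z| / Im z)^2 = (a d + b c)^2 + (a c y - b d / y)^2, so the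
  distance between g(i R_+) and i R_+ is arcosh |a d + b c|, attained where a c y^2 = b d.
  Such a y exists since g \<notin> S forces a b c d > 0 (for a b c d < 0 some g(i y) would lie on
  i R_+). Then a d and b c have the same sign and differ by 1, which turns
  arcosh (|a d| + |b c|) into 2 log (sqrt |a d| + sqrt |b c|), and |a d| + |b c| > 1.
\<close>

lemma arcosh_real_mono:
  fixes x y :: real
  assumes "1 \<le> x" "x \<le> y"
  shows "arcosh x \<le> arcosh y"
  using arcosh_less_iff_real[of y x] assms by (simp add: not_less[symmetric])

lemma arcosh_add_eq_2_ln_sqrt:
  fixes p q :: real
  assumes "p \<ge> 0" "q \<ge> 0" "\<bar>p - q\<bar> = 1"
  shows "arcosh (p + q) = 2 * ln (sqrt p + sqrt q)"
proof -
  have "1 \<le> p + q" using assms by linarith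
  have "(p - q)^2 = 1" using assms(3) by (metis power2_abs power_one)
  then have "(p + q)^2 - 1 = 4 * p * q"
    by (simp add: power2_eq_square algebra_simps)
  also have "\<dots> = (2 * sqrt p * sqrt q)^2"
    using assms(1,2) by (simp add: power_mult_distrib)
  finally have "sqrt ((p + q)^2 - 1) = 2 * sqrt p * sqrt q"
    using assms(1,2) by simp
  then have "p + q + sqrt ((p + q)^2 - 1) = (sqrt p + sqrt q)^2"
    using assms(1,2) by (simp add: power2_eq_square algebra_simps)
  moreover have "sqrt p + sqrt q > 0"
    using \<open>1 \<le> p + q\<close> assms(1,2)
    by (cases "p > 0") (auto intro: add_pos_nonneg add_nonneg_pos)
  ultimately show ?thesis
    using \<open>1 \<le> p + q\<close> by (simp add: arcosh_real_def ln_realpow)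
qed

lemma hdist_i_times:
  assumes "Im z > 0" "t > 0"
  shows "hdist z (\<i> * of_real t) = arcosh ((cmod z ^ 2 + t^2) / (2 * Im z * t))"
proof -
  have "cmod (z - \<i> * of_real t) ^ 2 = cmod z ^ 2 - 2 * Im z * t + t^2"
    unfolding cmod_power2 by (simp add: power2_eq_square algebra_simps)
  then have "1 + (cmod (z - \<i> * of_real t))\<^sup>2 / (2 * Im z * t) = (cmod z ^ 2 + t^2) / (2 * Im z * t)"
    using assms by (simp add: field_simps)
  then show ?thesis by (simp add: hdist_def)
qed

lemma norm_div_Im_ge_1:
  assumes "Im z > 0"
  shows "cmod z / Im z \<ge> 1"
  using assms abs_Im_le_cmod[of z] by simp

lemma hdist_i_times_ge:
  assumes "Im z > 0" "t > 0"
  shows "arcosh (cmod z / Im z) \<le> hdist z (\<i> * of_real t)"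
proof -
  have "2 * cmod z * t \<le> cmod z ^ 2 + t^2"
    using sum_squares_ge_zero[of 0 "cmod z - t"] by (simp add: power2_eq_square algebra_simps)
  then have "cmod z / Im z \<le> (cmod z ^ 2 + t^2) / (2 * Im z * t)"
    using assms by (simp add: field_simps)
  then show ?thesis
    using assms by (simp add: hdist_i_times arcosh_real_mono[OF norm_div_Im_ge_1])
qed

lemma hdist_i_times_norm:
  assumes "Im z > 0"
  shows "hdist z (\<i> * of_real (cmod z)) = arcosh (cmod z / Im z)"
proof -
  have "cmod z > 0" using assms by auto
  then show ?thesis
    using assms by (simp add: hdist_i_times power2_eq_square)
qed

lemma hdist_set_eqI:
  assumes "\<And>z w. z \<in> A \<Longrightarrow> w \<in> B \<Longrightarrow> m \<le> hdist z w"
    and "z \<in> A" "w \<in> B" "hdist z w = m"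
  shows "hdist_set A B = m"
  unfolding hdist_set_def using assms by (intro cInf_eq_minimum) blast+

lemma mobius_i_times:
  assumes "sl2 a b c d"
  shows "mobius a b c d (\<i> * of_real y)
           = Complex ((a*c*y^2 + b*d) / (c^2*y^2 + d^2)) (y / (c^2*y^2 + d^2))"
proof -
  have "a*d*y - b*c*y = y" using assms by (simp add: sl2_def left_diff_distrib[symmetric])
  then show ?thesis
    by (simp add: mobius_def complex_eq_iff Re_divide Im_divide power2_eq_square algebra_simps
        add_divide_distrib diff_divide_distrib[symmetric])
qed

lemma Im_mobius_i_times_pos:
  assumes "sl2 a b c d" "y > 0"
  shows "Im (mobius a b c d (\<i> * of_real y)) > 0"
proof -
  have "c \<noteq> 0 \<or> d \<noteq> 0" using assms(1) by (auto simp: sl2_def)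
  then have "c^2*y^2 + d^2 > 0" using assms(2) by (auto intro: add_pos_nonneg add_nonneg_pos)
  then show ?thesis using assms by (simp add: mobius_i_times)
qed

lemma norm_div_Im_mobius_i_times:
  assumes "sl2 a b c d" "y > 0"
  defines "z \<equiv> mobius a b c d (\<i> * of_real y)"
  shows "(cmod z / Im z)^2 = (a*d + b*c)^2 + (a*c*y - b*d/y)^2"
proof -
  define D where "D = c^2*y^2 + d^2"
  have "D \<noteq> 0" using Im_mobius_i_times_pos[OF assms(1,2)] by (auto simp: mobius_i_times[OF assms(1)] D_def)
  have z: "z = Complex ((a*c*y^2 + b*d) / D) (y / D)"
    by (simp add: z_def mobius_i_times[OF assms(1)] D_def)
  have "(cmod z / Im z)^2 = cmod z ^ 2 / Im z ^ 2"
    by (simp add: power_divide)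
  also have "\<dots> = ((a*c*y^2 + b*d)^2 + y^2) / y^2"
    using \<open>D \<noteq> 0\<close> assms(2) by (simp add: z cmod_power2 power_divide field_simps)
  also have "\<dots> = 1 + (a*c*y + b*d/y)^2"
    using assms(2) by (simp add: field_simps power2_eq_square)
  also have "\<dots> = (a*d - b*c)^2 + (a*c*y + b*d/y)^2"
    using assms(1) by (simp add: sl2_def)
  also have "\<dots> = (a*d + b*c)^2 + (a*c*y - b*d/y)^2"
    using assms(2) by (simp add: field_simps power2_eq_square)
  finally show ?thesis .
qed

lemma abcd_pos_if_not_in_S:
  assumes "sl2 a b c d" "\<not> in_S a b c d"
  shows "a*b*c*d > 0"
proof (rule ccontr)
  assume "\<not> a*b*c*d > 0"
  moreover have "a*b*c*d \<noteq> 0" using assms(2) by (auto simp: in_S_def in_s_def)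
  ultimately have "(a*c) * (b*d) < 0" by (simp add: mult_ac less_le)
  then have pos: "- (b*d) / (a*c) > 0"
    using mult_less_0_iff[of "a*c" "b*d"] by (auto simp: divide_less_0_iff)
  define y where "y = sqrt (- (b*d) / (a*c))"
  have "y > 0" using pos by (simp add: y_def)
  have "a*c \<noteq> 0" "y^2 = - (b*d) / (a*c)"
    using \<open>(a*c) * (b*d) < 0\<close> pos by (auto simp: y_def)
  then have "Re (mobius a b c d (\<i> * of_real y)) = 0"
    by (simp add: mobius_i_times[OF assms(1)] field_simps)
  then have "mobius a b c d (\<i> * of_real y) = \<i> * of_real (Im (mobius a b c d (\<i> * of_real y)))"
    by (simp add: complex_eq_iff)
  with Im_mobius_i_times_pos[OF assms(1) \<open>y > 0\<close>] \<open>y > 0\<close> assms(2) show False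
    unfolding in_S_def by blast
qed

lemma hdist_set_mobius_imag_axis:
  assumes "sl2 a b c d" "a*b*c*d > 0"
  shows "hdist_set (mobius a b c d ` imag_axis) imag_axis = arcosh \<bar>a*d + b*c\<bar>"
proof -
  let ?z = "\<lambda>y. mobius a b c d (\<i> * of_real y)"
  have Im_pos: "Im (?z y) > 0" if "y > 0" for y
    using Im_mobius_i_times_pos[OF assms(1) that] .
  have abs_le_norm_div_Im: "\<bar>a*d + b*c\<bar> \<le> cmod (?z y) / Im (?z y)" if "y > 0" for y
  proof -
    have "(a*d + b*c)^2 \<le> (cmod (?z y) / Im (?z y))^2"
      using norm_div_Im_mobius_i_times[OF assms(1) that] by simp
    then show ?thesis
      using power2_le_imp_le[of "\<bar>a*d + b*c\<bar>"] Im_pos[OF that] by simp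
  qed
  have "(a*d + b*c)^2 = (a*d - b*c)^2 + 4 * (a*b*c*d)"
    by (simp add: power2_eq_square algebra_simps)
  then have "1 \<le> (a*d + b*c)^2"
    using assms by (simp add: sl2_def)
  then have abs_ge_1: "1 \<le> \<bar>a*d + b*c\<bar>"
    using power2_le_imp_le[of 1 "\<bar>a*d + b*c\<bar>"] by simp
  show ?thesis
  proof (rule hdist_set_eqI)
    fix z w assume "z \<in> mobius a b c d ` imag_axis" "w \<in> imag_axis"
    then obtain y t where "y > 0" "t > 0" "z = ?z y" "w = \<i> * of_real t"
      by (auto simp: imag_axis_def)
    then show "arcosh \<bar>a*d + b*c\<bar> \<le> hdist z w"
      using abs_le_norm_div_Im Im_pos hdist_i_times_ge arcosh_real_mono[OF abs_ge_1] order.trans by metis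
  next
    \<comment> \<open>The AM-GM defect (a c y - b d / y)^2 vanishes at y^2 = b d / (a c).\<close>
    have "(a*c) * (b*d) > 0"
      using assms(2) by (simp add: mult_ac)
    then have pos: "b*d / (a*c) > 0"
      by (auto simp: zero_less_mult_iff zero_less_divide_iff)
    define y where "y = sqrt (b*d / (a*c))"
    have "y > 0" using pos by (simp add: y_def)
    have "a*c \<noteq> 0" "y^2 = b*d / (a*c)"
      using assms(2) pos by (auto simp: y_def)
    then have "a*c*y - b*d/y = 0"
      using \<open>y > 0\<close> by (simp add: field_simps power2_eq_square)
    then have "(cmod (?z y) / Im (?z y))^2 = (a*d + b*c)^2"
      using norm_div_Im_mobius_i_times[OF assms(1) \<open>y > 0\<close>] by simp
    moreover have "cmod (?z y) / Im (?z y) \<ge> 0"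
      using Im_pos[OF \<open>y > 0\<close>] by simp
    ultimately have "cmod (?z y) / Im (?z y) = \<bar>a*d + b*c\<bar>"
      by (metis abs_of_nonneg real_sqrt_abs)
    then show "hdist (?z y) (\<i> * of_real (cmod (?z y))) = arcosh \<bar>a*d + b*c\<bar>"
      using hdist_i_times_norm[OF Im_pos] \<open>y > 0\<close> by simp
    show "?z y \<in> mobius a b c d ` imag_axis"
      using \<open>y > 0\<close> by (auto simp: imag_axis_def)
    show "\<i> * of_real (cmod (?z y)) \<in> imag_axis"
      using Im_pos[OF \<open>y > 0\<close>] by (auto simp: imag_axis_def)
  qed
qed

theorem proposition4p4:
  fixes a b c d :: real
  assumes "sl2 a b c d" and "\<not> in_S a b c d"
  shows "ln (sqrt \<bar>a * d\<bar> + sqrt \<bar>b * c\<bar>)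
           = hdist_set (mobius a b c d ` imag_axis) imag_axis / 2
         \<and> ln (sqrt \<bar>a * d\<bar> + sqrt \<bar>b * c\<bar>) > 0"
proof -
  have abcd: "a*b*c*d > 0"
    using abcd_pos_if_not_in_S[OF assms] .
  then have "(a*d) * (b*c) > 0"
    by (simp add: mult_ac)
  then have same_sign: "a*d > 0 \<and> b*c > 0 \<or> a*d < 0 \<and> b*c < 0"
    by (simp add: zero_less_mult_iff)
  then have "\<bar>a*d + b*c\<bar> = \<bar>a*d\<bar> + \<bar>b*c\<bar>" "\<bar>\<bar>a*d\<bar> - \<bar>b*c\<bar>\<bar> = 1"
    using assms(1) by (auto simp: sl2_def)
  then have dist: "hdist_set (mobius a b c d ` imag_axis) imag_axis
      = 2 * ln (sqrt \<bar>a*d\<bar> + sqrt \<bar>b*c\<bar>)"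
    using hdist_set_mobius_imag_axis[OF assms(1) abcd] arcosh_add_eq_2_ln_sqrt by simp
  have "\<bar>a*d\<bar> + \<bar>b*c\<bar> > 1"
    using same_sign assms(1) by (auto simp: sl2_def)
  then have "arcosh (\<bar>a*d\<bar> + \<bar>b*c\<bar>) > 0"
    by simp
  then show ?thesis
    using dist arcosh_add_eq_2_ln_sqrt \<open>\<bar>\<bar>a*d\<bar> - \<bar>b*c\<bar>\<bar> = 1\<close> by simp
qed

end
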